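(* Let $\mathbb{K}$ be a field of characteristic zero, $a_1,\ldots,a_s\in\mathbb{Z}^d$, $A$ the $d\times s$ matrix with columns $a_i$, and $\varphi:(\mathbb{K}\setminus\{0\})^d\to\mathbb{K}^s$, $x\mapsto(x^{a_1},\ldots,x^{a_s})$. Let $n\ge1$, let $\alpha_1<\cdots<\alpha_D$ be the elements of $\Lambda_{d,n}$, and let $J=\{\beta_1,\ldots,\beta_D\}\subset\Lambda_{s,n}$ with $\beta_1<\cdots<\beta_D$. Let $L_J$ be the $D\times D$ submatrix of $D^n_x(\varphi)$ formed by the rows $\beta_1,\ldots,\beta_D$ and all columns. Then for $x\in(\mathbb{K}\setminus\{0\})^d$, $$\det(L_J)=\frac{x^{A\beta_1+\cdots+A\beta_D}}{x^{\alpha_1+\cdots+\alpha_D}}\det(L_J^c),$$ where $L_J^c=(c_{\beta_i,\alpha_j})_{i,j}$.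
   Context: $\Lambda_{t,n}=\{\gamma\in\mathbb{N}^t:1\le|\gamma|\le n\}$ with graded lexicographic order; $|\gamma|$ the sum of entries; $D=\binom{n+d}{d}-1$, $M=\binom{n+s}{s}-1$; $\alpha!=\prod_i\alpha(i)!$; $\binom\beta\gamma=\prod_i\binom{\beta(i)}{\gamma(i)}$; $x^m=\prod_ix_i^{m(i)}$. For a morphism $\varphi=(g_1,\ldots,g_s)$ regular at $x$, $D^n_x(\varphi)=\big(\frac1{\alpha!}\frac{\partial^\alpha(\varphi-\varphi(x))^\beta}{\partial X^\alpha}|_x\big)_{\beta\in\Lambda_{s,n},\alpha\in\Lambda_{d,n}}$ (an $M\times D$ matrix), where $(\varphi-\varphi(x))^\beta=\prod_j(g_j-g_j(x))^{\beta(j)}$. With $A_1,\ldots,A_d$ the rows of $A$: $b_{\gamma,\alpha}=\prod_{i=1}^d\prod_{j=0}^{\alpha(i)-1}(A_i\cdot\gamma-j)$ and $c_{\beta,\alpha}=\frac1{\alpha!}\sum_{\gamma\le\beta,\gamma\ne0}(-1)^{|\beta-\gamma|}\binom\beta\gamma b_{\gamma,\alpha}$ (constants depending only on $A$, $\beta$, $\alpha$). *)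

theory Defs
  imports "HOL-Library.Poly_Mapping" "Jordan_Normal_Form.Determinant"
begin

text \<open>Multi-indices in \<open>\<nat>^t\<close> are functions \<open>nat \<Rightarrow> nat\<close> vanishing outside \<open>{0..<t}\<close>.\<close>

definition mabs :: "nat \<Rightarrow> (nat \<Rightarrow> nat) \<Rightarrow> nat" where
  "mabs t \<gamma> = (\<Sum>i<t. \<gamma> i)"

definition Lambda :: "nat \<Rightarrow> nat \<Rightarrow> (nat \<Rightarrow> nat) set" where
  "Lambda t n = {\<gamma>. (\<forall>i\<ge>t. \<gamma> i = 0) \<and> 1 \<le> mabs t \<gamma> \<and> mabs t \<gamma> \<le> n}"

definition grlex_less :: "nat \<Rightarrow> (nat \<Rightarrow> nat) \<Rightarrow> (nat \<Rightarrow> nat) \<Rightarrow> bool" where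
  "grlex_less t \<gamma> \<delta> \<longleftrightarrow> mabs t \<gamma> < mabs t \<delta> \<or>
     (mabs t \<gamma> = mabs t \<delta> \<and> (\<exists>i<t. (\<forall>j<i. \<gamma> j = \<delta> j) \<and> \<gamma> i < \<delta> i))"

definition mfact :: "nat \<Rightarrow> (nat \<Rightarrow> nat) \<Rightarrow> nat" where
  "mfact t \<alpha> = (\<Prod>i<t. fact (\<alpha> i))"

definition mbinom :: "nat \<Rightarrow> (nat \<Rightarrow> nat) \<Rightarrow> (nat \<Rightarrow> nat) \<Rightarrow> nat" where
  "mbinom t \<beta> \<gamma> = (\<Prod>i<t. \<beta> i choose \<gamma> i)"

definition mpowi :: "nat \<Rightarrow> (nat \<Rightarrow> 'a::field) \<Rightarrow> (nat \<Rightarrow> int) \<Rightarrow> 'a" where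
  "mpowi d x v = (\<Prod>i<d. x i powi v i)"

text \<open>The vector \<open>A\<beta> = \<Sum>_k \<beta>_k a_k \<in> \<int>^d\<close>; \<open>a k i\<close> is entry \<open>i\<close> of column \<open>a_k\<close>.\<close>
definition Amul :: "nat \<Rightarrow> (nat \<Rightarrow> nat \<Rightarrow> int) \<Rightarrow> (nat \<Rightarrow> nat) \<Rightarrow> (nat \<Rightarrow> int)" where
  "Amul s a \<beta> = (\<lambda>i. \<Sum>k<s. a k i * int (\<beta> k))"

type_synonym 'a laurent = "(nat \<Rightarrow>\<^sub>0 int) \<Rightarrow>\<^sub>0 'a"

definition Lmonom :: "nat \<Rightarrow> (nat \<Rightarrow> int) \<Rightarrow> 'a::comm_ring_1 laurent" where
  "Lmonom d v = Poly_Mapping.single (\<Sum>i<d. Poly_Mapping.single i (v i)) 1"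

definition Lconst :: "'a::comm_ring_1 \<Rightarrow> 'a laurent" where
  "Lconst c = Poly_Mapping.single 0 c"

definition Lderiv :: "nat \<Rightarrow> 'a::comm_ring_1 laurent \<Rightarrow> 'a laurent" where
  "Lderiv i p = (\<Sum>m\<in>Poly_Mapping.keys p.
     Poly_Mapping.single (m - Poly_Mapping.single i 1) (of_int (Poly_Mapping.lookup m i) * Poly_Mapping.lookup p m))"

fun Lderivs :: "nat \<Rightarrow> (nat \<Rightarrow> nat) \<Rightarrow> 'a::comm_ring_1 laurent \<Rightarrow> 'a laurent" where
  "Lderivs 0 \<alpha> p = p"
| "Lderivs (Suc d) \<alpha> p = Lderivs d \<alpha> ((Lderiv d ^^ \<alpha> d) p)"

definition Leval :: "nat \<Rightarrow> (nat \<Rightarrow> 'a::field) \<Rightarrow> 'a laurent \<Rightarrow> 'a" where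
  "Leval d x p = (\<Sum>m\<in>Poly_Mapping.keys p. Poly_Mapping.lookup p m * mpowi d x (Poly_Mapping.lookup m))"

text \<open>Entry \<open>(\<beta>,\<alpha>)\<close> of \<open>D^n_x(\<phi>)\<close> for \<open>\<phi> = (X^{a_1},\<dots>,X^{a_s})\<close>:
  \<open>(1/\<alpha>!) \<partial>^\<alpha>(\<phi> - \<phi>(x))^\<beta> |_x\<close>.\<close>
definition Dentry :: "nat \<Rightarrow> nat \<Rightarrow> (nat \<Rightarrow> nat \<Rightarrow> int) \<Rightarrow> (nat \<Rightarrow> 'a::field) \<Rightarrow>
    (nat \<Rightarrow> nat) \<Rightarrow> (nat \<Rightarrow> nat) \<Rightarrow> 'a" where
  "Dentry d s a x \<beta> \<alpha> =
     Leval d x (Lderivs d \<alpha> (\<Prod>k<s. (Lmonom d (a k) - Lconst (mpowi d x (a k))) ^ \<beta> k))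
     / of_nat (mfact d \<alpha>)"

definition bconst :: "nat \<Rightarrow> nat \<Rightarrow> (nat \<Rightarrow> nat \<Rightarrow> int) \<Rightarrow> (nat \<Rightarrow> nat) \<Rightarrow> (nat \<Rightarrow> nat) \<Rightarrow> int" where
  "bconst d s a \<gamma> \<alpha> = (\<Prod>i<d. \<Prod>j<\<alpha> i. Amul s a \<gamma> i - int j)"

definition cconst :: "nat \<Rightarrow> nat \<Rightarrow> (nat \<Rightarrow> nat \<Rightarrow> int) \<Rightarrow> (nat \<Rightarrow> nat) \<Rightarrow> (nat \<Rightarrow> nat) \<Rightarrow> 'a::field" where
  "cconst d s a \<beta> \<alpha> = (1 / of_nat (mfact d \<alpha>)) *
     (\<Sum>\<gamma>\<in>{\<gamma>. (\<forall>i. \<gamma> i \<le> \<beta> i) \<and> \<gamma> \<noteq> (\<lambda>_. 0)}.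
        (-1) ^ (mabs s \<beta> - mabs s \<gamma>) * of_nat (mbinom s \<beta> \<gamma>) * of_int (bconst d s a \<gamma> \<alpha>))"

end

theory Submission
  imports Defs "HOL-Library.FuncSet"
begin

text \<open>Expanding (\<phi> - \<phi>(x))^\<beta> binomially writes it as a combination of the monomials X^(A\<gamma>),
  \<gamma> \<le> \<beta>, with coefficients \<plusminus>binom(\<beta>,\<gamma>) \<phi>(x)^(\<beta>-\<gamma>), and \<partial>^\<alpha> X^m evaluated at x is
  b(m,\<alpha>) x^(m-\<alpha>). Since \<phi>(x)^(\<beta>-\<gamma>) x^(A\<gamma>) = x^(A\<beta>) does not depend on \<gamma>, every entry
  factors as D(\<beta>,\<alpha>) = x^(A\<beta>) c(\<beta>,\<alpha>) x^(-\<alpha>); the term \<gamma> = 0 drops out because \<alpha> \<noteq> 0.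
  Thus L_J is L_J^c multiplied by diagonal matrices on both sides.\<close>

definition Lexp :: "nat \<Rightarrow> (nat \<Rightarrow> int) \<Rightarrow> (nat \<Rightarrow>\<^sub>0 int)" where
  "Lexp d v = (\<Sum>i<d. Poly_Mapping.single i (v i))"

lemma lookup_Lexp: "Poly_Mapping.lookup (Lexp d v) i = (if i < d then v i else 0)"
  by (simp add: Lexp_def lookup_sum lookup_single when_def)

lemma Lexp_sum: "Lexp d (\<lambda>i. \<Sum>k\<in>K. v k i) = (\<Sum>k\<in>K. Lexp d (v k))"
  by (rule poly_mapping_eqI) (simp add: lookup_Lexp lookup_sum)

lemma Lmonom_eq_single: "Lmonom d v = Poly_Mapping.single (Lexp d v) 1"
  by (simp add: Lmonom_def Lexp_def)

lemma prod_single: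
  "(\<Prod>k\<in>K. Poly_Mapping.single (m k) (c k)) =
    Poly_Mapping.single (\<Sum>k\<in>K. m k) (\<Prod>k\<in>K. c k :: 'b::comm_semiring_1)"
  for m :: "'c \<Rightarrow> 'a::comm_monoid_add"
  by (induction K rule: infinite_finite_induct) (simp_all add: mult_single)

lemma mpowi_cong: "(\<And>i. i < d \<Longrightarrow> v i = w i) \<Longrightarrow> mpowi d x v = mpowi d x w"
  by (simp add: mpowi_def)

lemma mpowi_add: "\<forall>i<d. x i \<noteq> 0 \<Longrightarrow> mpowi d x (\<lambda>i. v i + w i) = mpowi d x v * mpowi d x w"
  by (simp add: mpowi_def power_int_add prod.distrib)

lemma mpowi_diff: "\<forall>i<d. x i \<noteq> 0 \<Longrightarrow> mpowi d x (\<lambda>i. v i - w i) = mpowi d x v / mpowi d x w"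
  by (simp add: mpowi_def power_int_diff prod_dividef)

lemma mpowi_mult_nat: "mpowi d x (\<lambda>i. int r * v i) = mpowi d x v ^ r"
  by (simp add: mpowi_def power_int_power' prod_power_distrib mult.commute)

lemma mpowi_zero: "mpowi d x (\<lambda>i. 0) = 1"
  by (simp add: mpowi_def)

lemma mpowi_sum: "\<forall>i<d. x i \<noteq> 0 \<Longrightarrow> mpowi d x (\<lambda>i. \<Sum>k\<in>K. v k i) = (\<Prod>k\<in>K. mpowi d x (v k))"
  by (induction K rule: infinite_finite_induct) (simp_all add: mpowi_zero mpowi_add)

lemma Lderiv_eq_sum:
  assumes "finite K" "Poly_Mapping.keys p \<subseteq> K"
  shows "Lderiv i p = (\<Sum>m\<in>K. Poly_Mapping.single (m - Poly_Mapping.single i 1)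
            (of_int (Poly_Mapping.lookup m i) * Poly_Mapping.lookup p m))"
  unfolding Lderiv_def
  by (rule sum.mono_neutral_left[OF assms]) (auto simp: in_keys_iff)

lemma Lderiv_add: "Lderiv i (p + q) = Lderiv i p + Lderiv i q"
proof -
  have K: "finite (Poly_Mapping.keys p \<union> Poly_Mapping.keys q)" by simp
  show ?thesis
    using keys_add[of p q]
    by (simp add: Lderiv_eq_sum[OF K] lookup_add distrib_left single_add sum.distrib)
qed

lemma Lderiv_zero: "Lderiv i 0 = 0"
  by (simp add: Lderiv_def)

lemma Lderiv_sum: "Lderiv i (sum f A) = (\<Sum>a\<in>A. Lderiv i (f a))"
  by (induction A rule: infinite_finite_induct) (simp_all add: Lderiv_zero Lderiv_add)

lemma Lderiv_single: "Lderiv i (Poly_Mapping.single m c) =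
   Poly_Mapping.single (m - Poly_Mapping.single i 1) (of_int (Poly_Mapping.lookup m i) * c)"
  by (cases "c = 0") (simp_all add: Lderiv_def)

lemma funpow_Lderiv_single: "(Lderiv i ^^ k) (Poly_Mapping.single m c) =
   Poly_Mapping.single (m - Poly_Mapping.single i (int k))
     (c * of_int (\<Prod>j<k. Poly_Mapping.lookup m i - int j))"
proof (induction k)
  case (Suc k)
  have "m - Poly_Mapping.single i (int k) - Poly_Mapping.single i 1 = m - Poly_Mapping.single i (int (Suc k))"
    by (simp add: single_add[symmetric] add.commute diff_diff_eq)
  then show ?case
    by (simp add: Suc Lderiv_single lookup_minus algebra_simps)
qed simp

lemma funpow_Lderiv_sum: "(Lderiv i ^^ k) (sum f A) = (\<Sum>a\<in>A. (Lderiv i ^^ k) (f a))"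
  by (induction k) (simp_all add: Lderiv_sum)

lemma Lderivs_sum: "Lderivs d \<alpha> (sum f A) = (\<Sum>a\<in>A. Lderivs d \<alpha> (f a))"
  by (induction d arbitrary: f) (simp_all add: funpow_Lderiv_sum)

lemma Lderivs_single: "Lderivs d \<alpha> (Poly_Mapping.single m c) =
   Poly_Mapping.single (m - (\<Sum>i<d. Poly_Mapping.single i (int (\<alpha> i))))
     (c * of_int (\<Prod>i<d. \<Prod>j<\<alpha> i. Poly_Mapping.lookup m i - int j))"
proof (induction d arbitrary: m c)
  case (Suc d)
  have "(\<Prod>i<d. \<Prod>j<\<alpha> i. Poly_Mapping.lookup (m - Poly_Mapping.single d (int (\<alpha> d))) i - int j)
     = (\<Prod>i<d. \<Prod>j<\<alpha> i. Poly_Mapping.lookup m i - int j)"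
    by (intro prod.cong) (simp_all add: lookup_minus lookup_single when_def)
  then show ?case
    by (simp add: Suc funpow_Lderiv_single algebra_simps)
qed simp

lemma Leval_eq_sum:
  assumes "finite K" "Poly_Mapping.keys p \<subseteq> K"
  shows "Leval d x p = (\<Sum>m\<in>K. Poly_Mapping.lookup p m * mpowi d x (Poly_Mapping.lookup m))"
  unfolding Leval_def
  by (rule sum.mono_neutral_left[OF assms]) (auto simp: in_keys_iff)

lemma Leval_add: "Leval d x (p + q) = Leval d x p + Leval d x q"
proof -
  have K: "finite (Poly_Mapping.keys p \<union> Poly_Mapping.keys q)" by simp
  show ?thesis
    using keys_add[of p q]
    by (simp add: Leval_eq_sum[OF K] lookup_add distrib_right sum.distrib)
qed

lemma Leval_zero: "Leval d x 0 = 0"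
  by (simp add: Leval_def)

lemma Leval_sum: "Leval d x (sum f A) = (\<Sum>a\<in>A. Leval d x (f a))"
  by (induction A rule: infinite_finite_induct) (simp_all add: Leval_zero Leval_add)

lemma Leval_single: "Leval d x (Poly_Mapping.single m c) = c * mpowi d x (Poly_Mapping.lookup m)"
  by (cases "c = 0") (simp_all add: Leval_def)

lemma Leval_Lderivs_single:
  assumes "\<forall>i<d. x i \<noteq> 0"
  shows "Leval d x (Lderivs d \<alpha> (Poly_Mapping.single (Lexp d v) c)) =
    c * of_int (\<Prod>i<d. \<Prod>j<\<alpha> i. v i - int j) * (mpowi d x v / mpowi d x (\<lambda>i. int (\<alpha> i)))"
proof -
  have "(\<Prod>i<d. \<Prod>j<\<alpha> i. Poly_Mapping.lookup (Lexp d v) i - int j) = (\<Prod>i<d. \<Prod>j<\<alpha> i. v i - int j)"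
    by (intro prod.cong) (simp_all add: lookup_Lexp)
  moreover have "mpowi d x (Poly_Mapping.lookup (Lexp d v - (\<Sum>i<d. Poly_Mapping.single i (int (\<alpha> i)))))
     = mpowi d x (\<lambda>i. v i - int (\<alpha> i))"
    by (rule mpowi_cong) (simp add: lookup_minus lookup_Lexp lookup_sum lookup_single when_def)
  ultimately show ?thesis
    by (simp add: Lderivs_single Leval_single mpowi_diff[OF assms])
qed

lemma Lmonom_power: "Lmonom d v ^ j = Poly_Mapping.single (Lexp d (\<lambda>i. int j * v i)) 1"
proof -
  have "Lmonom d v ^ j = (\<Prod>k<j. Poly_Mapping.single (Lexp d v) 1)"
    by (simp add: Lmonom_eq_single)
  also have "\<dots> = Poly_Mapping.single (Lexp d (\<lambda>i. \<Sum>k<j. v i)) 1"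
    by (simp only: prod_single Lexp_sum prod.neutral_const)
  finally show ?thesis by simp
qed

lemma Lconst_power: "Lconst c ^ r = Lconst (c ^ r)"
  by (induction r) (simp_all add: Lconst_def mult_single)

lemma Lmonom_diff_Lconst_power:
  fixes c :: "'a::comm_ring_1"
  shows "(Lmonom d v - Lconst c) ^ r =
    (\<Sum>j\<le>r. Poly_Mapping.single (Lexp d (\<lambda>i. int j * v i)) (of_nat (r choose j) * (- c) ^ (r - j)))"
proof -
  have "Lmonom d v - Lconst c = Lmonom d v + Lconst (- c)"
    by (simp add: Lconst_def single_uminus)
  then have "(Lmonom d v - Lconst c) ^ r =
      (\<Sum>j\<le>r. of_nat (r choose j) * Lmonom d v ^ j * Lconst (- c) ^ (r - j))"
    by (simp only: binomial_ring)
  moreover have "of_nat k * Poly_Mapping.single m 1 * Lconst e = Poly_Mapping.single m (of_nat k * e)"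
    for k m and e :: 'a
    by (simp add: Lconst_def mult_single flip: single_of_nat)
  ultimately show ?thesis
    by (simp add: Lmonom_power Lconst_power)
qed

lemma Lexp_Amul: "(\<Sum>k<s. Lexp d (\<lambda>i. int (g k) * a k i)) = Lexp d (Amul s a g)"
  by (simp add: Amul_def Lexp_sum[symmetric] mult.commute)

lemma prod_Lmonom_diff_Lconst_power:
  "(\<Prod>k<s. (Lmonom d (a k) - Lconst (c k)) ^ \<beta> k) =
    (\<Sum>g\<in>PiE {..<s} (\<lambda>k. {..\<beta> k}). Poly_Mapping.single (Lexp d (Amul s a g))
       (\<Prod>k<s. of_nat (\<beta> k choose g k) * (- c k) ^ (\<beta> k - g k)))"
  by (simp add: Lmonom_diff_Lconst_power prod_sum_PiE prod_single Lexp_Amul)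

lemma mabs_cong: "(\<And>k. k < s \<Longrightarrow> g k = g' k) \<Longrightarrow> mabs s g = mabs s g'"
  by (simp add: mabs_def)

lemma mbinom_cong: "(\<And>k. k < s \<Longrightarrow> g k = g' k) \<Longrightarrow> mbinom s \<beta> g = mbinom s \<beta> g'"
  by (simp add: mbinom_def)

lemma Amul_cong: "(\<And>k. k < s \<Longrightarrow> g k = g' k) \<Longrightarrow> Amul s a g = Amul s a g'"
  by (simp add: Amul_def)

lemma bconst_cong: "(\<And>k. k < s \<Longrightarrow> g k = g' k) \<Longrightarrow> bconst d s a g \<alpha> = bconst d s a g' \<alpha>"
  by (simp add: bconst_def Amul_cong[of s g g'])

lemma bconst_zero:
  assumes "\<exists>i<d. \<alpha> i \<noteq> 0"
  shows "bconst d s a (\<lambda>_. 0) \<alpha> = 0"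
proof -
  obtain i where i: "i < d" "\<alpha> i \<noteq> 0" using assms by blast
  then have "(\<Prod>j<\<alpha> i. Amul s a (\<lambda>_. 0) i - int j) = 0"
    by (intro prod_zero) (auto intro!: bexI[of _ 0] simp: Amul_def)
  then show ?thesis
    using i unfolding bconst_def by (intro prod_zero) auto
qed

text \<open>Elements of \<open>PiE\<close> are \<open>undefined\<close> outside \<open>{..<s}\<close>, whereas multi-indices vanish there.\<close>

lemma bij_betw_extend_zero_PiE:
  fixes \<beta> :: "nat \<Rightarrow> nat"
  assumes "\<forall>i\<ge>s. \<beta> i = 0"
  shows "bij_betw (\<lambda>g k. if k < s then g k else 0) (PiE {..<s} (\<lambda>k. {..\<beta> k}))
    {\<gamma>. \<forall>i. \<gamma> i \<le> \<beta> i}"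
proof (rule bij_betw_byWitness[where f' = "\<lambda>\<gamma>. restrict \<gamma> {..<s}"])
  show "\<forall>g\<in>PiE {..<s} (\<lambda>k. {..\<beta> k}). restrict (\<lambda>k. if k < s then g k else 0) {..<s} = g"
    by (auto simp: fun_eq_iff PiE_iff extensional_def)
  show "\<forall>\<gamma>\<in>{\<gamma>. \<forall>i. \<gamma> i \<le> \<beta> i}. (\<lambda>k. if k < s then restrict \<gamma> {..<s} k else 0) = \<gamma>"
    using assms by (auto simp: fun_eq_iff) (metis le_zero_eq not_less)
  show "(\<lambda>g k. if k < s then g k else 0) ` PiE {..<s} (\<lambda>k. {..\<beta> k}) \<subseteq> {\<gamma>. \<forall>i. \<gamma> i \<le> \<beta> i}"
  proof (clarify)
    fix g i assume "g \<in> PiE {..<s} (\<lambda>k. {..\<beta> k})"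
    then show "(if i < s then g i else 0) \<le> \<beta> i"
      by (cases "i < s") (simp_all add: PiE_iff)
  qed
  show "(\<lambda>\<gamma>. restrict \<gamma> {..<s}) ` {\<gamma>. \<forall>i. \<gamma> i \<le> \<beta> i} \<subseteq> PiE {..<s} (\<lambda>k. {..\<beta> k})"
    by (simp add: image_subset_iff restrict_PiE_iff)
qed

lemma cconst_eq_sum_PiE:
  fixes \<beta> \<alpha> :: "nat \<Rightarrow> nat"
  assumes \<beta>: "\<forall>i\<ge>s. \<beta> i = 0" and \<alpha>: "\<exists>i<d. \<alpha> i \<noteq> 0"
  shows "cconst d s a \<beta> \<alpha> = 1 / of_nat (mfact d \<alpha>) *
    (\<Sum>g\<in>PiE {..<s} (\<lambda>k. {..\<beta> k}).
       (-1) ^ (mabs s \<beta> - mabs s g) * of_nat (mbinom s \<beta> g) * of_int (bconst d s a g \<alpha>))"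
proof -
  let ?t = "\<lambda>\<gamma>. (-1) ^ (mabs s \<beta> - mabs s \<gamma>) * of_nat (mbinom s \<beta> \<gamma>) * (of_int (bconst d s a \<gamma> \<alpha>) :: 'a)"
  let ?ext = "\<lambda>g k. if k < s then g k else 0"
  let ?S = "{\<gamma>. \<forall>i. \<gamma> i \<le> \<beta> i}"
  note bij = bij_betw_extend_zero_PiE[OF \<beta>]
  have "finite ?S"
    using bij_betw_finite[OF bij] by (simp add: finite_PiE)
  moreover have "?t (\<lambda>_. 0) = 0"
    by (simp add: bconst_zero[OF \<alpha>])
  ultimately have "(\<Sum>\<gamma>\<in>?S - {\<lambda>_. 0}. ?t \<gamma>) = (\<Sum>\<gamma>\<in>?S. ?t \<gamma>)"
    by (intro sum.mono_neutral_left) auto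
  also have "\<dots> = (\<Sum>g\<in>PiE {..<s} (\<lambda>k. {..\<beta> k}). ?t (?ext g))"
    by (rule sum.reindex_bij_betw[OF bij, symmetric])
  also have "\<dots> = (\<Sum>g\<in>PiE {..<s} (\<lambda>k. {..\<beta> k}). ?t g)"
  proof (intro sum.cong refl)
    fix g :: "nat \<Rightarrow> nat"
    have "mabs s (?ext g) = mabs s g" "mbinom s \<beta> (?ext g) = mbinom s \<beta> g"
      "bconst d s a (?ext g) \<alpha> = bconst d s a g \<alpha>"
      by (intro mabs_cong mbinom_cong bconst_cong; simp)+
    then show "?t (?ext g) = ?t g"
      by simp
  qed
  also have "?S - {\<lambda>_. 0} = {\<gamma>. (\<forall>i. \<gamma> i \<le> \<beta> i) \<and> \<gamma> \<noteq> (\<lambda>_. 0)}"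
    by blast
  finally show ?thesis
    by (simp add: cconst_def)
qed

lemma prod_binomial_coeffs:
  fixes c :: "nat \<Rightarrow> 'a::comm_ring_1" and \<beta> g :: "nat \<Rightarrow> nat"
  assumes "\<forall>k<s. g k \<le> \<beta> k"
  shows "(\<Prod>k<s. of_nat (\<beta> k choose g k) * (- c k) ^ (\<beta> k - g k)) =
    (-1) ^ (mabs s \<beta> - mabs s g) * of_nat (mbinom s \<beta> g) * (\<Prod>k<s. c k ^ (\<beta> k - g k))"
proof -
  have "(\<Prod>k<s. of_nat (\<beta> k choose g k) * (- c k) ^ (\<beta> k - g k)) =
      (\<Prod>k<s. (-1) ^ (\<beta> k - g k) * (of_nat (\<beta> k choose g k) * c k ^ (\<beta> k - g k)))"
    by (intro prod.cong refl) (subst power_minus, simp)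
  also have "\<dots> = (-1) ^ (\<Sum>k<s. \<beta> k - g k) * of_nat (mbinom s \<beta> g) * (\<Prod>k<s. c k ^ (\<beta> k - g k))"
    by (simp add: prod.distrib power_sum mbinom_def)
  also have "(\<Sum>k<s. \<beta> k - g k) = mabs s \<beta> - mabs s g"
    using assms unfolding mabs_def by (intro sum_subtractf_nat) simp
  finally show ?thesis .
qed

lemma prod_mpowi_power_mult_mpowi_Amul:
  assumes x: "\<forall>i<d. x i \<noteq> 0" and g: "\<forall>k<s. g k \<le> \<beta> k"
  shows "(\<Prod>k<s. mpowi d x (a k) ^ (\<beta> k - g k)) * mpowi d x (Amul s a g) = mpowi d x (Amul s a \<beta>)"
proof -
  have "(\<Prod>k<s. mpowi d x (a k) ^ (\<beta> k - g k)) = mpowi d x (\<lambda>i. \<Sum>k<s. int (\<beta> k - g k) * a k i)"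
    by (simp add: mpowi_sum[OF x] mpowi_mult_nat)
  moreover have "(\<lambda>i. (\<Sum>k<s. int (\<beta> k - g k) * a k i) + Amul s a g i) = Amul s a \<beta>"
    using g by (auto simp: Amul_def sum.distrib[symmetric] of_nat_diff algebra_simps intro!: sum.cong)
  ultimately show ?thesis
    by (metis (no_types) mpowi_add[OF x])
qed

lemma Dentry_eq_cconst:
  fixes x :: "nat \<Rightarrow> 'a::field" and \<beta> \<alpha> :: "nat \<Rightarrow> nat"
  assumes x: "\<forall>i<d. x i \<noteq> 0" and \<beta>: "\<forall>i\<ge>s. \<beta> i = 0" and \<alpha>: "\<exists>i<d. \<alpha> i \<noteq> 0"
  shows "Dentry d s a x \<beta> \<alpha> =
    mpowi d x (Amul s a \<beta>) / mpowi d x (\<lambda>l. int (\<alpha> l)) * cconst d s a \<beta> \<alpha>"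
proof -
  let ?c = "\<lambda>k. mpowi d x (a k)"
  let ?G = "PiE {..<s} (\<lambda>k. {..\<beta> k})"
  let ?P = "\<lambda>g. \<Prod>k<s. of_nat (\<beta> k choose g k) * (- ?c k) ^ (\<beta> k - g k)"
  let ?t = "\<lambda>g. (-1) ^ (mabs s \<beta> - mabs s g) * of_nat (mbinom s \<beta> g) * (of_int (bconst d s a g \<alpha>) :: 'a)"
  let ?R = "mpowi d x (Amul s a \<beta>) / mpowi d x (\<lambda>l. int (\<alpha> l))"
  have "Leval d x (Lderivs d \<alpha> (\<Prod>k<s. (Lmonom d (a k) - Lconst (?c k)) ^ \<beta> k)) =
      (\<Sum>g\<in>?G. ?P g * of_int (bconst d s a g \<alpha>) * (mpowi d x (Amul s a g) / mpowi d x (\<lambda>l. int (\<alpha> l))))"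
    by (simp add: prod_Lmonom_diff_Lconst_power Lderivs_sum Leval_sum Leval_Lderivs_single[OF x] bconst_def)
  also have "\<dots> = (\<Sum>g\<in>?G. ?t g * ?R)"
  proof (intro sum.cong refl)
    fix g assume "g \<in> ?G"
    then have g: "\<forall>k<s. g k \<le> \<beta> k" by (simp add: PiE_iff)
    show "?P g * of_int (bconst d s a g \<alpha>) * (mpowi d x (Amul s a g) / mpowi d x (\<lambda>l. int (\<alpha> l))) = ?t g * ?R"
      by (simp only: prod_binomial_coeffs[OF g] prod_mpowi_power_mult_mpowi_Amul[OF x g, symmetric]
          times_divide_eq_right mult_ac)
  qed
  also have "\<dots> = (\<Sum>g\<in>?G. ?t g) * ?R"
    by (rule sum_distrib_right[symmetric])
  finally show ?thesis
    by (simp add: Dentry_def cconst_eq_sum_PiE[OF \<beta> \<alpha>])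
qed

lemma card_multi_indices_bounded:
  "card {\<gamma>::nat\<Rightarrow>nat. (\<forall>i\<ge>d. \<gamma> i = 0) \<and> mabs d \<gamma> \<le> n} = (n + d choose d)"
proof -
  let ?T = "{\<gamma>::nat\<Rightarrow>nat. (\<forall>i\<ge>d. \<gamma> i = 0) \<and> mabs d \<gamma> \<le> n}"
  let ?L = "{l::nat list. size l = Suc d \<and> sum_list l = n}"
  let ?f = "\<lambda>\<gamma>::nat\<Rightarrow>nat. map \<gamma> [0..<d] @ [n - mabs d \<gamma>]"
  let ?g = "\<lambda>l::nat list. (\<lambda>i. if i < d then l ! i else 0)"
  have sum_list_map: "sum_list (map \<gamma> [0..<d]) = mabs d \<gamma>" for \<gamma> :: "nat \<Rightarrow> nat"
    by (simp add: mabs_def sum_set_upt_conv_sum_list_nat[symmetric] atLeast0LessThan)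
  have sum_list_nth: "sum_list l = (\<Sum>i<d. l ! i) + l ! d" if "l \<in> ?L" for l
    using that by (simp add: sum_list_sum_nth atLeast0LessThan)
  have mabs_g: "mabs d (?g l) = (\<Sum>i<d. l ! i)" for l
    by (simp add: mabs_def)
  have "bij_betw ?f ?T ?L"
  proof (rule bij_betw_byWitness[where f' = ?g])
    show "\<forall>\<gamma>\<in>?T. ?g (?f \<gamma>) = \<gamma>"
      by (auto simp: nth_append fun_eq_iff)
    show "\<forall>l\<in>?L. ?f (?g l) = l"
    proof
      fix l assume l: "l \<in> ?L"
      then have "(\<Sum>i<d. l ! i) + l ! d = n"
        using sum_list_nth[OF l] by simp
      then have "n - mabs d (?g l) = l ! d"
        by (simp add: mabs_g)
      then show "?f (?g l) = l"
        by (intro nth_equalityI) (use l in \<open>auto simp: nth_append less_Suc_eq\<close>)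
    qed
    show "?f ` ?T \<subseteq> ?L"
      using sum_list_map by auto
    show "?g ` ?L \<subseteq> ?T"
      using sum_list_nth mabs_g by fastforce
  qed
  then have "card ?T = card ?L"
    by (rule bij_betw_same_card)
  also have "\<dots> = (n + d choose n)"
    using card_length_sum_list[of "Suc d" n] by simp
  finally show ?thesis
    by (simp add: binomial_symmetric[of n "n + d"])
qed

lemma mabs_ge_1:
  assumes "\<gamma> \<noteq> (\<lambda>_. 0)" "\<forall>i\<ge>t. \<gamma> i = 0"
  shows "1 \<le> mabs t \<gamma>"
proof -
  obtain i where i: "\<gamma> i \<noteq> 0"
    using assms(1) by blast
  with assms(2) have "i < t"
    by (meson not_less)
  then have "\<gamma> i \<le> mabs t \<gamma>"
    unfolding mabs_def by (intro member_le_sum) auto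
  with i show ?thesis
    by simp
qed

lemma Lambda_nonzero:
  assumes "\<gamma> \<in> Lambda t n"
  shows "\<exists>i<t. \<gamma> i \<noteq> 0"
proof (rule ccontr)
  assume "\<not> (\<exists>i<t. \<gamma> i \<noteq> 0)"
  then have "mabs t \<gamma> = 0"
    by (simp add: mabs_def)
  with assms show False
    by (simp add: Lambda_def)
qed

lemma card_Lambda: "card (Lambda d n) = (n + d choose d) - 1"
proof -
  let ?T = "{\<gamma>::nat\<Rightarrow>nat. (\<forall>i\<ge>d. \<gamma> i = 0) \<and> mabs d \<gamma> \<le> n}"
  have "finite ?T"
    using card_multi_indices_bounded[of d n] by (intro card_ge_0_finite) simp
  moreover have "mabs d (\<lambda>_. 0) = 0"
    by (simp add: mabs_def)
  moreover have "Lambda d n = ?T - {\<lambda>_. 0}"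
    using mabs_ge_1[of _ d] \<open>mabs d (\<lambda>_. 0) = 0\<close> by (force simp: Lambda_def)
  ultimately show ?thesis
    by (simp add: card_Diff_singleton card_multi_indices_bounded)
qed

lemma sorted_wrt_irrefl_imp_distinct: "(\<And>x. \<not> R x x) \<Longrightarrow> sorted_wrt R xs \<Longrightarrow> distinct xs"
  by (induction xs) auto

lemma grlex_less_irrefl: "\<not> grlex_less t \<gamma> \<gamma>"
  by (auto simp: grlex_less_def)

lemma det_mat_diag: "det (mat_diag n f) = (\<Prod>i<n. f i :: 'a::comm_ring_1)"
  by (subst det_upper_triangular[of _ n])
    (auto simp: mat_diag_def upper_triangular_def prod_list_diag_prod atLeast0LessThan)

lemma det_mat_scale_rows_cols:
  fixes r q :: "nat \<Rightarrow> 'a::comm_ring_1"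
  shows "det (mat n n (\<lambda>(i, j). r i * f i j * q j)) =
    (\<Prod>i<n. r i) * det (mat n n (\<lambda>(i, j). f i j)) * (\<Prod>j<n. q j)"
proof -
  let ?M = "mat n n (\<lambda>(i, j). f i j)"
  have M: "?M \<in> carrier_mat n n" by simp
  have "mat n n (\<lambda>(i, j). r i * f i j * q j) = mat_diag n r * ?M * mat_diag n q"
    by (rule eq_matI) (auto simp: mat_diag_mult_left[OF M] mat_diag_mult_right[of _ n])
  also have "det \<dots> = det (mat_diag n r) * det ?M * det (mat_diag n q)"
    using mult_carrier_mat[OF mat_diag_dim M]
    by (simp add: det_mult[OF _ mat_diag_dim] det_mult[OF mat_diag_dim M])
  finally show ?thesis
    by (simp add: det_mat_diag)
qed

theorem proposition2p3:
  fixes d s n D :: nat and a :: "nat \<Rightarrow> nat \<Rightarrow> int" and x :: "nat \<Rightarrow> 'a::field"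
    and alphas betas :: "(nat \<Rightarrow> nat) list"
  assumes char0: "CHAR('a) = 0"
    and n: "n \<ge> 1"
    and D: "D = (n + d choose d) - 1"
    and x: "\<forall>i<d. x i \<noteq> 0"
    and alphas: "set alphas = Lambda d n" "sorted_wrt (grlex_less d) alphas"
    and betas: "set betas \<subseteq> Lambda s n" "length betas = D" "sorted_wrt (grlex_less s) betas"
  shows "det (mat D D (\<lambda>(i, j). Dentry d s a x (betas ! i) (alphas ! j))) =
    mpowi d x (\<lambda>l. \<Sum>i<D. Amul s a (betas ! i) l) / mpowi d x (\<lambda>l. \<Sum>j<D. int ((alphas ! j) l))
    * det (mat D D (\<lambda>(i, j). cconst d s a (betas ! i) (alphas ! j)))"
proof -
  \<comment> \<open>Both sides carry the same factor \<open>1/\<alpha>!\<close>.\<close>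
  have "length alphas = D"
    using distinct_card[OF sorted_wrt_irrefl_imp_distinct[OF grlex_less_irrefl alphas(2)]]
    by (simp add: alphas(1) card_Lambda D)
  then have "\<exists>l<d. (alphas ! j) l \<noteq> 0" if "j < D" for j
    using that alphas(1) by (intro Lambda_nonzero) auto
  moreover have "\<forall>k\<ge>s. (betas ! i) k = 0" if "i < D" for i
    using that betas(1,2) nth_mem by (fastforce simp: Lambda_def)
  ultimately have "mat D D (\<lambda>(i, j). Dentry d s a x (betas ! i) (alphas ! j)) =
      mat D D (\<lambda>(i, j). mpowi d x (Amul s a (betas ! i)) * cconst d s a (betas ! i) (alphas ! j)
        * (1 / mpowi d x (\<lambda>l. int ((alphas ! j) l))))"
    by (intro cong_mat refl) (simp add: Dentry_eq_cconst[OF x])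
  then have "det (mat D D (\<lambda>(i, j). Dentry d s a x (betas ! i) (alphas ! j))) =
      (\<Prod>i<D. mpowi d x (Amul s a (betas ! i)))
      * det (mat D D (\<lambda>(i, j). cconst d s a (betas ! i) (alphas ! j)))
      * (\<Prod>j<D. 1 / mpowi d x (\<lambda>l. int ((alphas ! j) l)))"
    by (simp only: det_mat_scale_rows_cols)
  then show ?thesis
    by (simp add: mpowi_sum[OF x] prod_dividef)
qed

end
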